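(* Let $p(z)$, $E$, $\Sigma_1$, $\Sigma_2$ be as in the context. Then \[ \mathrm{Im}\,(p(z)-E)>0\quad\text{for } z\in\mathbb{C}^+\setminus\Sigma_1,\qquad \mathrm{Im}\,(p(z)-E)<0\quad\text{for } z\in\mathbb{C}^-\setminus\Sigma_2 . \]
   Context: Fix $z_j=\xi_j+\mathrm{i}\eta_j$ ($j=1,2$) with $0<\eta_1<\eta_2$, and consider the genus-one Riemann surface $R^2=(z-z_1)(z-\bar z_1)(z-z_2)(z-\bar z_2)$, with sheet 1 determined by $R>0$ for $\mathrm{Re}\,z>0$ large, a canonical homology basis $\mathcal{A},\mathcal{B}$ satisfying $\sigma(\mathcal{A})=-\mathcal{A}$, $\sigma(\mathcal{B})=\mathcal{B}$ under the anti-holomorphic involution $\sigma(z,R)=(\bar z,\bar R)$. Let $\mathrm{d}p$ be the unique meromorphic differential of the second kind with $\mathrm{d}p=\pm(1+\mathcal{O}(z^{-2}))\mathrm{d}z$ as $z\to\infty^\pm$ and $\oint_{\mathcal{A}}\mathrm{d}p=0$ (explicitly $\mathrm{d}p=\frac{z^2-\mathrm{Re}(z_1+z_2)z+c_0}{R}\mathrm{d}z$ for a real constant $c_0$). Let $p(z)=\int_{z_2}^z\mathrm{d}p$ on sheet 1, so that $p(z)=z+E+\mathcal{O}(z^{-1})$ as $z\to\infty$, with $E\in\mathbb{R}$. It is assumed that the level set $\{z:\mathrm{Im}\,p(z)=0\}$ consists of $\mathbb{R}$ together with two arcs not meeting $\mathbb{R}$: $\Sigma_1\subset\mathbb{C}^+$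 joining $z_1$ to $z_2$ and $\Sigma_2=\overline{\Sigma_1}\subset\mathbb{C}^-$ joining $\bar z_1$ to $\bar z_2$; these are the branch cuts of $R$, and $p$ is single-valued and analytic on $\mathbb{C}\setminus(\Sigma_1\cup\Sigma_2)$ (the $\mathcal{A}$-normalization makes it single valued). *)

theory Defs
  imports "HOL-Complex_Analysis.Complex_Analysis"
begin

text \<open>The quartic whose square root defines the genus-one surface:
  R(z)^2 = (z - z1)(z - conj z1)(z - z2)(z - conj z2).\<close>
definition quartic :: "complex \<Rightarrow> complex \<Rightarrow> complex \<Rightarrow> complex" where
  "quartic z1 z2 z = (z - z1) * (z - cnj z1) * (z - z2) * (z - cnj z2)"

definition dp_density ::
  "complex \<Rightarrow> complex \<Rightarrow> real \<Rightarrow> (complex \<Rightarrow> complex) \<Rightarrow> complex \<Rightarrow> complex" where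
  "dp_density z1 z2 c0 R z =
     (z^2 - of_real (Re (z1 + z2)) * z + of_real c0) / R z"

end

theory Submission imports Defs begin

text \<open>Off the cuts, \<open>Im p\<close> vanishes only on the real axis, so it has constant sign on
  \<open>{Im z > 0} - \<Sigma>1\<close>, and that sign is read off far up the imaginary axis, where
  \<open>p(z) = z + E + o(1)\<close> with \<open>E\<close> real. This set is connected: an arc does not separate the plane,
  and a path avoiding \<open>\<Sigma>1\<close> can be pushed up to a small height below which \<open>\<Sigma>1\<close> does not reach.
  The lower half plane follows by the reflection \<open>z \<mapsto> cnj z\<close>. Only the level-set description,
  the asymptotics at infinity and the continuity of \<open>p\<close> are used.\<close>

lemma connected_upper_half_plane_Diff:
  fixes K :: "complex set"
  assumes "compact K" "K \<subseteq> {z. Im z > 0}" "connected (- K)"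
  shows "connected ({z. Im z > 0} - K)"
  unfolding connected_iff_connected_component
proof (intro ballI)
  let ?U = "{z. Im z > 0} - K"
  obtain m where "m > 0" and m: "\<forall>w\<in>K. m \<le> Im w"
  proof -
    have "K \<inter> {z. Im z = 0} = {}" using assms(2) by auto
    then obtain m where "m > 0" and m: "\<forall>w\<in>K. \<forall>x\<in>{z. Im z = 0}. m \<le> dist w x"
      using separate_compact_closed[OF assms(1) closed_halfspace_Im_eq] by blast
    have "m \<le> Im w" if "w \<in> K" for w
      using m[rule_format, OF that, of "of_real (Re w)"] assms(2) that
      by (auto simp: dist_norm cmod_eq_Im)
    then show thesis using that \<open>m > 0\<close> by blast
  qed
  fix x y assume x: "x \<in> ?U" and y: "y \<in> ?U"
  define d where "d = min m (min (Im x) (Im y)) / 2"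
  have d: "0 < d" "d < m" "d \<le> Im x" "d \<le> Im y"
    using x y \<open>m > 0\<close> by (auto simp: d_def)
  \<comment> \<open>the vertical retraction onto \<open>{Im z \<ge> d}\<close>; below height \<open>m\<close> it cannot hit \<open>K\<close>\<close>
  define r where "r z = Complex (Re z) (max (Im z) d)" for z
  have "connected (r ` (- K))"
    by (rule connected_continuous_image[OF _ assms(3)]) (auto simp: r_def intro!: continuous_intros)
  moreover have "r ` (- K) \<subseteq> ?U"
  proof
    fix w assume "w \<in> r ` (- K)"
    then obtain z where z: "z \<notin> K" "w = r z" by auto
    show "w \<in> ?U"
    proof (cases "d \<le> Im z")
      case True
      then have "w = z" using z(2) by (simp add: r_def complex_eq_iff)
      then show ?thesis using z(1) True d by simp
    next
      case False
      then have "Im w = d" using z(2) by (simp add: r_def)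
      then show ?thesis using m d by auto
    qed
  qed
  moreover have "r x = x" "r y = y"
    using d by (auto simp: r_def complex_eq_iff)
  ultimately show "connected_component ?U x y"
    unfolding connected_component_def using x y by (metis DiffD2 Compl_iff image_eqI)
qed

lemma connected_nonvanishing_pos:
  fixes f :: "'a::topological_space \<Rightarrow> real"
  assumes "connected U" "continuous_on U f" "\<forall>z\<in>U. f z \<noteq> 0"
    and "a \<in> U" "f a > 0" "z \<in> U"
  shows "f z > 0"
proof (rule ccontr)
  assume "\<not> f z > 0"
  then have "f z < 0" using assms(3,6) by force
  have "connected (f ` U)" using assms(1,2) connected_continuous_image by blast
  then have "0 \<in> f ` U"
    unfolding connected_iff_interval using \<open>f z < 0\<close> assms(4-6)
    by (metis image_eqI less_imp_le)
  then show False using assms(3) by auto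
qed

lemma
  fixes f :: "complex \<Rightarrow> complex"
  assumes "((\<lambda>z. f z - z) \<longlongrightarrow> c) at_infinity"
  shows filterlim_Im_upper_imaginary_axis: "filterlim (\<lambda>y. Im (f (\<i> * of_real y))) at_top at_top"
    and filterlim_Im_lower_imaginary_axis: "filterlim (\<lambda>y. Im (f (- \<i> * of_real y))) at_bot at_top"
proof -
  have "((\<lambda>y. Im (f (s * of_real y)) - Im s * y) \<longlongrightarrow> Im c) at_top" if "norm s = 1" for s
  proof -
    have "filterlim (\<lambda>y::real. s * of_real y) at_infinity at_top"
      unfolding filterlim_at_infinity_conv_norm_at_top
      using that by (simp add: norm_mult filterlim_abs_real)
    from tendsto_Im[OF filterlim_compose[OF assms this]] show ?thesis by simp
  qed
  note lim = this
  show "filterlim (\<lambda>y. Im (f (\<i> * of_real y))) at_top at_top"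
    using filterlim_tendsto_add_at_top[OF lim[of \<i>] filterlim_ident] by simp
  have "filterlim (\<lambda>y. - Im (f (- \<i> * of_real y))) at_top at_top"
    using filterlim_tendsto_add_at_top[OF tendsto_minus[OF lim[of "- \<i>"]] filterlim_ident]
    by simp
  then show "filterlim (\<lambda>y. Im (f (- \<i> * of_real y))) at_bot at_top"
    by (simp add: filterlim_uminus_at_bot)
qed

lemma pos_on_upper_half_plane_Diff:
  fixes g :: "complex \<Rightarrow> real"
  assumes K: "compact K" "K \<subseteq> {z. Im z > 0}" "connected (- K)"
    and g: "continuous_on ({z. Im z > 0} - K) g" "\<forall>z\<in>{z. Im z > 0} - K. g z \<noteq> 0"
    and g_far: "filterlim (\<lambda>y. g (\<i> * of_real y)) at_top at_top"
    and z: "Im z > 0" "z \<notin> K"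
  shows "g z > 0"
proof -
  obtain B where B: "\<forall>w\<in>K. norm w \<le> B"
    using compact_imp_bounded[OF K(1)] bounded_iff by blast
  have "\<forall>\<^sub>F y in at_top. g (\<i> * of_real y) > 0 \<and> y > max 0 B"
    using g_far by (simp add: filterlim_at_top_dense eventually_conj_iff eventually_gt_at_top)
  then obtain y where y: "g (\<i> * of_real y) > 0" "y > max 0 B"
    using eventually_happens'[OF trivial_limit_at_top_linorder] by blast
  have "norm (\<i> * of_real y) > B" using y(2) by (simp add: norm_mult)
  then have "\<i> * of_real y \<in> {z. Im z > 0} - K" using B y(2) by force
  with connected_nonvanishing_pos[OF connected_upper_half_plane_Diff[OF K] g _ y(1)] z
  show ?thesis by blast
qed

lemma neg_on_lower_half_plane_Diff:
  fixes g :: "complex \<Rightarrow> real"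
  assumes K: "compact K" "K \<subseteq> {z. Im z > 0}" "connected (- K)"
    and g: "continuous_on ({z. Im z < 0} - cnj ` K) g" "\<forall>z\<in>{z. Im z < 0} - cnj ` K. g z \<noteq> 0"
    and g_far: "filterlim (\<lambda>y. g (- \<i> * of_real y)) at_bot at_top"
    and z: "Im z < 0" "z \<notin> cnj ` K"
  shows "g z < 0"
proof -
  have maps: "cnj w \<in> {z. Im z < 0} - cnj ` K" if "w \<in> {z. Im z > 0} - K" for w
    using that by (auto simp: image_iff)
  have "continuous_on ({z. Im z > 0} - K) (\<lambda>w. - g (cnj w))"
    by (intro continuous_on_minus continuous_on_compose2[OF g(1) _ image_subsetI[OF maps]]
        continuous_intros)
  moreover have "\<forall>w\<in>{z. Im z > 0} - K. - g (cnj w) \<noteq> 0"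
    using g(2) maps by simp
  moreover have "filterlim (\<lambda>y. - g (cnj (\<i> * of_real y))) at_top at_top"
    using g_far by (simp add: filterlim_uminus_at_bot)
  moreover have "Im (cnj z) > 0" "cnj z \<notin> K"
    using z by (auto simp: image_iff)
  ultimately have "- g (cnj (cnj z)) > 0"
    using pos_on_upper_half_plane_Diff[OF K, of "\<lambda>w. - g (cnj w)" "cnj z"] by blast
  then show ?thesis by simp
qed

theorem lemma2p1:
  fixes z1 z2 :: complex and c0 E :: real
    and \<gamma> :: "real \<Rightarrow> complex"
    and \<Sigma>1 \<Sigma>2 :: "complex set"
    and R p :: "complex \<Rightarrow> complex"
  assumes heta: "0 < Im z1" "Im z1 < Im z2"
    (* \<Sigma>1: an arc in the open upper half plane joining z1 to z2; \<Sigma>2 its mirror image *)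
    and harc: "arc \<gamma>" "pathstart \<gamma> = z1" "pathfinish \<gamma> = z2"
    and hS1: "\<Sigma>1 = path_image \<gamma>"
    and hS1up: "\<forall>w\<in>\<Sigma>1. Im w > 0"
    and hS2: "\<Sigma>2 = cnj ` \<Sigma>1"
    (* R: the sheet-1 branch of the square root, with branch cuts \<Sigma>1, \<Sigma>2 *)
    and hRhol: "R holomorphic_on (- (\<Sigma>1 \<union> \<Sigma>2))"
    and hRsq: "\<forall>z\<in>- (\<Sigma>1 \<union> \<Sigma>2). (R z)^2 = quartic z1 z2 z"
    and hRsheet: "\<exists>M. \<forall>x::real. x > M \<longrightarrow> Im (R (of_real x)) = 0 \<and> Re (R (of_real x)) > 0"
    (* p = \<integral>_{z2}^z dp, single-valued analytic on C minus the cuts (A-normalisation) *)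
    and hpderiv: "\<forall>z\<in>- (\<Sigma>1 \<union> \<Sigma>2). (p has_field_derivative dp_density z1 z2 c0 R z) (at z)"
    and hpz2: "(p \<longlongrightarrow> 0) (at z2 within (- (\<Sigma>1 \<union> \<Sigma>2)))"
    (* p(z) = z + E + O(1/z) at infinity, E real *)
    and hE: "((\<lambda>z. p z - z) \<longlongrightarrow> of_real E) at_infinity"
    (* level set of Im p: the real line (off the cuts) together with the cuts \<Sigma>1, \<Sigma>2 *)
    and hlevel: "{z. z \<notin> \<Sigma>1 \<union> \<Sigma>2 \<and> Im (p z) = 0} = {z. Im z = 0}"
    and hlevelcuts: "\<forall>w\<in>\<Sigma>1 \<union> \<Sigma>2. ((\<lambda>z. Im (p z)) \<longlongrightarrow> 0) (at w within (- (\<Sigma>1 \<union> \<Sigma>2)))"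
  shows "(\<forall>z. Im z > 0 \<and> z \<notin> \<Sigma>1 \<longrightarrow> Im (p z - of_real E) > 0) \<and>
         (\<forall>z. Im z < 0 \<and> z \<notin> \<Sigma>2 \<longrightarrow> Im (p z - of_real E) < 0)"
proof -
  let ?S = "\<Sigma>1 \<union> \<Sigma>2"
  have cut: "compact \<Sigma>1" "\<Sigma>1 \<subseteq> {z. Im z > 0}" "connected (- \<Sigma>1)"
    using harc(1) hS1 hS1up path_connected_arc_complement[OF harc(1)]
    by (auto simp: arc_imp_path compact_path_image path_connected_imp_connected)
  have cont: "continuous_on (- ?S) (\<lambda>z. Im (p z))"
    using hpderiv by (intro continuous_intros continuous_at_imp_continuous_on)
      (auto intro: DERIV_isCont)
  have "{z. Im z > 0} - \<Sigma>1 \<subseteq> - ?S" "{z. Im z < 0} - \<Sigma>2 \<subseteq> - ?S"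
    using hS1up hS2 by auto
  moreover have "Im (p z) \<noteq> 0" if "z \<notin> ?S" "Im z \<noteq> 0" for z
    using hlevel that by blast
  ultimately have "\<forall>z\<in>{z. Im z > 0} - \<Sigma>1. Im (p z) \<noteq> 0" "\<forall>z\<in>{z. Im z < 0} - \<Sigma>2. Im (p z) \<noteq> 0"
    and "continuous_on ({z. Im z > 0} - \<Sigma>1) (\<lambda>z. Im (p z))"
    and "continuous_on ({z. Im z < 0} - \<Sigma>2) (\<lambda>z. Im (p z))"
    using continuous_on_subset[OF cont] by auto
  with pos_on_upper_half_plane_Diff[OF cut, of "\<lambda>z. Im (p z)"]
    neg_on_lower_half_plane_Diff[OF cut, of "\<lambda>z. Im (p z)"]
    filterlim_Im_upper_imaginary_axis[OF hE] filterlim_Im_lower_imaginary_axis[OF hE]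
  show ?thesis unfolding hS2 by simp
qed

end
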